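(* Let $n\ge1$, let $\alpha,\beta,c$ be real constants and $F$ a smooth real function of one variable. Consider $$F(p)_{tt}-\alpha p_{ttt}-\beta\,\nabla^2p_t=c^2\nabla^2p$$ for $p(x_1,\dots,x_n,t)$, where $\nabla^2=\sum_{i=1}^n\partial^2/\partial x_i^2$. Let $\phi(x_1,\dots,x_n)$ and $\psi(x_1,\dots,x_n)$ be harmonic functions ($\nabla^2\phi=\nabla^2\psi=0$). Then every smooth solution $p$ satisfies the conservation law $\partial_tT^t+\sum_{i=1}^n\partial_{x_i}T^{x_i}=0$ with $$T^t=(\phi+t\psi)\big(F'(p)p_t-\alpha p_{tt}\big)-\psi\big(F(p)-\alpha p_t\big),$$ $$T^{x_i}=-c^2\big[(\phi+t\psi)p_{x_i}-p(\phi_{x_i}+t\psi_{x_i})\big]-\beta\big[(\phi+t\psi)p_{tx_i}-(\phi_{x_i}+t\psi_{x_i})p_t\big].$$ In particular, for $n\ge2$ the equation has infinitely many conservation laws.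
   Context: Subscripts denote partial derivatives. The corresponding multiplier is $\Lambda=\phi+t\psi$. *)

theory Defs
  imports "HOL-Analysis.Analysis"
begin

text \<open>C-infinity smoothness of a real-valued function on a Euclidean space:
  differentiable everywhere, and every directional derivative is again smooth
  (greatest fixed point, i.e. derivatives of all orders exist).\<close>
coinductive smooth :: "('a::euclidean_space \<Rightarrow> real) \<Rightarrow> bool" where
  "(\<forall>x. f differentiable (at x)) \<Longrightarrow>
   (\<forall>v. smooth (\<lambda>x. frechet_derivative f (at x) v)) \<Longrightarrow> smooth f"

definition pd_t :: "(real^'n \<Rightarrow> real \<Rightarrow> real) \<Rightarrow> real^'n \<Rightarrow> real \<Rightarrow> real" where
  "pd_t f x t = deriv (\<lambda>s. f x s) t"

definition pd_x :: "'n \<Rightarrow> (real^'n \<Rightarrow> real \<Rightarrow> real) \<Rightarrow> real^'n \<Rightarrow> real \<Rightarrow> real" where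
  "pd_x i f x t = deriv (\<lambda>s. f (\<chi> j. if j = i then s else x $ j) t) (x $ i)"

definition pdx :: "'n \<Rightarrow> (real^'n \<Rightarrow> real) \<Rightarrow> real^'n \<Rightarrow> real" where
  "pdx i f x = deriv (\<lambda>s. f (\<chi> j. if j = i then s else x $ j)) (x $ i)"

definition laplacian :: "(real^'n \<Rightarrow> real) \<Rightarrow> real^'n \<Rightarrow> real" where
  "laplacian f x = (\<Sum>i\<in>UNIV. pdx i (pdx i f) x)"

definition laplacian_xt :: "(real^'n \<Rightarrow> real \<Rightarrow> real) \<Rightarrow> real^'n \<Rightarrow> real \<Rightarrow> real" where
  "laplacian_xt f x t = (\<Sum>i\<in>UNIV. pd_x i (pd_x i f) x t)"

definition harmonic :: "(real^'n \<Rightarrow> real) \<Rightarrow> bool" where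
  "harmonic f \<longleftrightarrow> smooth f \<and> (\<forall>x. laplacian f x = 0)"

definition solves_eq :: "(real \<Rightarrow> real) \<Rightarrow> real \<Rightarrow> real \<Rightarrow> real \<Rightarrow> (real^'n \<Rightarrow> real \<Rightarrow> real) \<Rightarrow> bool" where
  "solves_eq F \<alpha> \<beta> c p \<longleftrightarrow>
    (\<forall>x t. pd_t (pd_t (\<lambda>y s. F (p y s))) x t - \<alpha> * pd_t (pd_t (pd_t p)) x t
            - \<beta> * laplacian_xt (pd_t p) x t = c\<^sup>2 * laplacian_xt p x t)"

definition Tt :: "(real \<Rightarrow> real) \<Rightarrow> real \<Rightarrow> (real^'n \<Rightarrow> real) \<Rightarrow> (real^'n \<Rightarrow> real)
    \<Rightarrow> (real^'n \<Rightarrow> real \<Rightarrow> real) \<Rightarrow> real^'n \<Rightarrow> real \<Rightarrow> real" where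
  "Tt F \<alpha> \<phi> \<psi> p x t =
     (\<phi> x + t * \<psi> x) * (deriv F (p x t) * pd_t p x t - \<alpha> * pd_t (pd_t p) x t)
     - \<psi> x * (F (p x t) - \<alpha> * pd_t p x t)"

definition Tx :: "real \<Rightarrow> real \<Rightarrow> (real^'n \<Rightarrow> real) \<Rightarrow> (real^'n \<Rightarrow> real)
    \<Rightarrow> (real^'n \<Rightarrow> real \<Rightarrow> real) \<Rightarrow> 'n \<Rightarrow> real^'n \<Rightarrow> real \<Rightarrow> real" where
  "Tx \<beta> c \<phi> \<psi> p i x t =
     - c\<^sup>2 * ((\<phi> x + t * \<psi> x) * pd_x i p x t - p x t * (pdx i \<phi> x + t * pdx i \<psi> x))
     - \<beta> * ((\<phi> x + t * \<psi> x) * pd_x i (pd_t p) x t - (pdx i \<phi> x + t * pdx i \<psi> x) * pd_t p x t)"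

end

theory Submission
  imports Defs
begin

(* Multiplying the equation by Lambda = phi + t psi and moving the derivatives off p gives
     D_t T^t + sum_i D_(x_i) T^(x_i)
       = Lambda (F(p)_tt - alpha p_ttt - beta lap p_t - c^2 lap p) + (c^2 p + beta p_t) (lap phi + t lap psi),
   so the divergence vanishes on solutions whenever phi and psi are harmonic.  For n >= 2 the
   functions Re ((x_a + i x_b)^k) are harmonic for every k; on the x_a-axis they restrict to the
   monomials s^k, hence they are linearly independent and yield infinitely many multipliers. *)

lemma smooth_imp_differentiable: "smooth f \<Longrightarrow> f differentiable (at x)"
  by (erule smooth.cases) auto

lemma smooth_frechet_derivative: "smooth f \<Longrightarrow> smooth (\<lambda>x. frechet_derivative f (at x) v)"
  by (erule smooth.cases) auto

lemma has_real_derivative_frechet_derivative_along: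
  fixes f :: "'a::real_normed_vector \<Rightarrow> real" and \<gamma> :: "real \<Rightarrow> 'a"
  assumes f: "f differentiable (at y)"
    and \<gamma>: "(\<gamma> has_derivative (\<lambda>h. h *\<^sub>R v)) (at s)" and "\<gamma> s = y"
  shows "((\<lambda>s. f (\<gamma> s)) has_real_derivative frechet_derivative f (at y) v) (at s)"
proof -
  have "(f has_derivative frechet_derivative f (at y)) (at (\<gamma> s))"
    using f \<open>\<gamma> s = y\<close> frechet_derivative_works by blast
  from diff_chain_at[OF \<gamma> this]
  have "((\<lambda>s. f (\<gamma> s)) has_derivative (\<lambda>h. frechet_derivative f (at y) (h *\<^sub>R v))) (at s)"
    by (simp add: o_def)
  moreover have "frechet_derivative f (at y) (h *\<^sub>R v) = frechet_derivative f (at y) v * h" for h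
    using linear_scale[OF has_derivative_linear[OF frechet_derivative_works[THEN iffD1, OF f]]]
    by simp
  ultimately show ?thesis
    by (simp add: has_field_derivative_def)
qed

lemma deriv_eq_frechet_derivative:
  fixes F :: "real \<Rightarrow> real"
  assumes "F differentiable (at y)"
  shows "deriv F y = frechet_derivative F (at y) 1"
  using has_real_derivative_frechet_derivative_along[OF assms, of "\<lambda>s. s" 1 y]
  by (simp add: DERIV_imp_deriv)

lemma smooth_deriv:
  assumes "smooth (F :: real \<Rightarrow> real)"
  shows "smooth (deriv F)"
proof -
  have "deriv F = (\<lambda>y. frechet_derivative F (at y) 1)"
    using assms by (simp add: fun_eq_iff deriv_eq_frechet_derivative smooth_imp_differentiable)
  then show ?thesis
    using smooth_frechet_derivative[OF assms] by simp
qed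

lemma has_derivative_coordinate_line:
  "((\<lambda>s. (\<chi> j. if j = i then s else x $ j) :: real^'n) has_derivative (\<lambda>h. h *\<^sub>R axis i 1)) (at s)"
proof -
  have "(\<lambda>s. (\<chi> j. if j = i then s else x $ j) :: real^'n)
      = (\<lambda>s. (\<chi> j. if j = i then 0 else x $ j) + s *\<^sub>R axis i 1)"
    by (auto simp: vec_eq_iff axis_def)
  then show ?thesis
    by (auto intro!: derivative_eq_intros)
qed

lemma coordinate_line_self: "(\<chi> j. if j = i then x $ i else x $ j) = (x :: real^'n)"
  by (simp add: vec_eq_iff)

lemma has_real_derivative_pdx_frechet:
  "f differentiable (at x) \<Longrightarrow>
   ((\<lambda>s. f (\<chi> j. if j = i then s else x $ j)) has_real_derivative
      frechet_derivative f (at x) (axis i 1)) (at (x $ i))"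
  by (rule has_real_derivative_frechet_derivative_along[OF _
        has_derivative_coordinate_line coordinate_line_self])

lemma pdx_eq_frechet_derivative:
  "f differentiable (at x) \<Longrightarrow> pdx i f x = frechet_derivative f (at x) (axis i 1)"
  unfolding pdx_def by (rule DERIV_imp_deriv[OF has_real_derivative_pdx_frechet])

lemma has_real_derivative_pdx:
  "f differentiable (at x) \<Longrightarrow>
   ((\<lambda>s. f (\<chi> j. if j = i then s else x $ j)) has_real_derivative pdx i f x) (at (x $ i))"
  by (simp add: pdx_eq_frechet_derivative has_real_derivative_pdx_frechet)

lemma smooth_pdx:
  assumes "smooth f"
  shows "smooth (pdx i f)"
proof -
  have "pdx i f = (\<lambda>x. frechet_derivative f (at x) (axis i 1))"
    using assms by (simp add: fun_eq_iff pdx_eq_frechet_derivative smooth_imp_differentiable)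
  then show ?thesis
    using smooth_frechet_derivative[OF assms] by simp
qed

definition smooth_xt :: "(real^'n \<Rightarrow> real \<Rightarrow> real) \<Rightarrow> bool" where
  "smooth_xt q \<longleftrightarrow> smooth (\<lambda>z. q (fst z) (snd z))"

lemma has_real_derivative_pd_t_frechet:
  assumes "smooth_xt q"
  shows "((\<lambda>s. q x s) has_real_derivative
    frechet_derivative (\<lambda>z. q (fst z) (snd z)) (at (x, t)) (0, 1)) (at t)"
proof -
  have line: "((\<lambda>s. (x, s)) has_derivative (\<lambda>h. h *\<^sub>R (0, 1))) (at t)"
    by (auto intro!: derivative_eq_intros)
  show ?thesis
    using has_real_derivative_frechet_derivative_along[OF _ line refl, of "\<lambda>z. q (fst z) (snd z)"]
      assms by (simp add: smooth_xt_def smooth_imp_differentiable)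
qed

lemma pd_t_eq_frechet_derivative:
  "smooth_xt q \<Longrightarrow> pd_t q x t = frechet_derivative (\<lambda>z. q (fst z) (snd z)) (at (x, t)) (0, 1)"
  unfolding pd_t_def by (rule DERIV_imp_deriv[OF has_real_derivative_pd_t_frechet])

lemma has_real_derivative_pd_t:
  "smooth_xt q \<Longrightarrow> ((\<lambda>s. q x s) has_real_derivative pd_t q x t) (at t)"
  by (simp add: pd_t_eq_frechet_derivative has_real_derivative_pd_t_frechet)

lemma smooth_xt_pd_t:
  assumes "smooth_xt q"
  shows "smooth_xt (pd_t q)"
proof -
  have "(\<lambda>z. pd_t q (fst z) (snd z))
      = (\<lambda>z. frechet_derivative (\<lambda>z. q (fst z) (snd z)) (at z) (0, 1))"
    using assms by (simp add: fun_eq_iff pd_t_eq_frechet_derivative)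
  then show ?thesis
    using assms smooth_frechet_derivative by (simp add: smooth_xt_def)
qed

lemma has_real_derivative_pd_x_frechet:
  assumes "smooth_xt q"
  shows "((\<lambda>s. q (\<chi> j. if j = i then s else x $ j) t) has_real_derivative
    frechet_derivative (\<lambda>z. q (fst z) (snd z)) (at (x, t)) (axis i 1, 0)) (at (x $ i))"
proof -
  have line: "((\<lambda>s. ((\<chi> j. if j = i then s else x $ j) :: real^'a, t))
      has_derivative (\<lambda>h. h *\<^sub>R (axis i 1, 0))) (at (x $ i))"
    by (auto intro!: derivative_eq_intros has_derivative_coordinate_line)
  show ?thesis
    using has_real_derivative_frechet_derivative_along[OF _ line, of "\<lambda>z. q (fst z) (snd z)"]
      assms by (simp add: smooth_xt_def smooth_imp_differentiable coordinate_line_self)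
qed

lemma pd_x_eq_frechet_derivative:
  "smooth_xt q \<Longrightarrow>
   pd_x i q x t = frechet_derivative (\<lambda>z. q (fst z) (snd z)) (at (x, t)) (axis i 1, 0)"
  unfolding pd_x_def by (rule DERIV_imp_deriv[OF has_real_derivative_pd_x_frechet])

lemma has_real_derivative_pd_x:
  "smooth_xt q \<Longrightarrow>
   ((\<lambda>s. q (\<chi> j. if j = i then s else x $ j) t) has_real_derivative pd_x i q x t) (at (x $ i))"
  by (simp add: pd_x_eq_frechet_derivative has_real_derivative_pd_x_frechet)

lemma smooth_xt_pd_x:
  assumes "smooth_xt q"
  shows "smooth_xt (pd_x i q)"
proof -
  have "(\<lambda>z. pd_x i q (fst z) (snd z))
      = (\<lambda>z. frechet_derivative (\<lambda>z. q (fst z) (snd z)) (at z) (axis i 1, 0))"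
    using assms by (simp add: fun_eq_iff pd_x_eq_frechet_derivative)
  then show ?thesis
    using assms smooth_frechet_derivative by (simp add: smooth_xt_def)
qed

lemma has_real_derivative_deriv_smooth:
  "smooth (F :: real \<Rightarrow> real) \<Longrightarrow> (F has_real_derivative deriv F y) (at y)"
  by (simp add: DERIV_deriv_iff_real_differentiable smooth_imp_differentiable)

lemma pd_t_comp:
  assumes "smooth F" and "smooth_xt p"
  shows "pd_t (\<lambda>y s. F (p y s)) = (\<lambda>y s. deriv F (p y s) * pd_t p y s)"
  unfolding pd_t_def[of "\<lambda>y s. F (p y s)"] fun_eq_iff
  by (intro allI DERIV_imp_deriv DERIV_chain2[OF has_real_derivative_deriv_smooth[OF assms(1)]]
      has_real_derivative_pd_t[OF assms(2)])

lemma pd_t_Tt: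
  assumes F: "smooth F" and p: "smooth_xt p"
  shows "pd_t (Tt F \<alpha> \<phi> \<psi> p) x t
    = (\<phi> x + t * \<psi> x) * (pd_t (pd_t (\<lambda>y s. F (p y s))) x t - \<alpha> * pd_t (pd_t (pd_t p)) x t)"
proof -
  define G where "G s = deriv F (p x s) * pd_t p x s" for s
  note dp = has_real_derivative_pd_t[OF p]
    and dpt = has_real_derivative_pd_t[OF smooth_xt_pd_t[OF p]]
    and dptt = has_real_derivative_pd_t[OF smooth_xt_pd_t[OF smooth_xt_pd_t[OF p]]]
  have dF: "((\<lambda>s. F (p x s)) has_real_derivative G t) (at t)"
    unfolding G_def by (rule DERIV_chain2[OF has_real_derivative_deriv_smooth[OF F] dp])
  have "G differentiable (at t)"
    using DERIV_mult[OF DERIV_chain2[OF has_real_derivative_deriv_smooth[OF smooth_deriv[OF F]] dp] dpt]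
    unfolding G_def[abs_def] real_differentiable_def by blast
  then have dG: "(G has_real_derivative pd_t (pd_t (\<lambda>y s. F (p y s))) x t) (at t)"
    by (simp add: pd_t_comp[OF F p] pd_t_def G_def[abs_def] DERIV_deriv_iff_real_differentiable)
  have "(\<lambda>s. Tt F \<alpha> \<phi> \<psi> p x s)
      = (\<lambda>s. (\<phi> x + s * \<psi> x) * (G s - \<alpha> * pd_t (pd_t p) x s) - \<psi> x * (F (p x s) - \<alpha> * pd_t p x s))"
    by (simp add: fun_eq_iff Tt_def G_def)
  moreover have "((\<lambda>s. (\<phi> x + s * \<psi> x) * (G s - \<alpha> * pd_t (pd_t p) x s) - \<psi> x * (F (p x s) - \<alpha> * pd_t p x s))
      has_real_derivative (\<phi> x + t * \<psi> x) * (pd_t (pd_t (\<lambda>y s. F (p y s))) x t - \<alpha> * pd_t (pd_t (pd_t p)) x t)) (at t)"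
    by (rule derivative_eq_intros dG dF dp dpt dptt refl | simp add: algebra_simps G_def)+
  ultimately show ?thesis
    unfolding pd_t_def[of "Tt F \<alpha> \<phi> \<psi> p"] by (simp add: DERIV_imp_deriv)
qed

lemma pd_x_Tx:
  assumes \<phi>: "smooth \<phi>" and \<psi>: "smooth \<psi>" and p: "smooth_xt p"
  shows "pd_x i (Tx \<beta> c \<phi> \<psi> p i) x t
    = - c\<^sup>2 * ((\<phi> x + t * \<psi> x) * pd_x i (pd_x i p) x t
                - p x t * (pdx i (pdx i \<phi>) x + t * pdx i (pdx i \<psi>) x))
      - \<beta> * ((\<phi> x + t * \<psi> x) * pd_x i (pd_x i (pd_t p)) x t
                - (pdx i (pdx i \<phi>) x + t * pdx i (pdx i \<psi>) x) * pd_t p x t)"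
proof -
  note d\<phi> = has_real_derivative_pdx[OF smooth_imp_differentiable[OF \<phi>]]
    and d\<phi>' = has_real_derivative_pdx[OF smooth_imp_differentiable[OF smooth_pdx[OF \<phi>]]]
    and d\<psi> = has_real_derivative_pdx[OF smooth_imp_differentiable[OF \<psi>]]
    and d\<psi>' = has_real_derivative_pdx[OF smooth_imp_differentiable[OF smooth_pdx[OF \<psi>]]]
    and dp = has_real_derivative_pd_x[OF p]
    and dp' = has_real_derivative_pd_x[OF smooth_xt_pd_x[OF p]]
    and dpt = has_real_derivative_pd_x[OF smooth_xt_pd_t[OF p]]
    and dpt' = has_real_derivative_pd_x[OF smooth_xt_pd_x[OF smooth_xt_pd_t[OF p]]]
  have "((\<lambda>s. Tx \<beta> c \<phi> \<psi> p i (\<chi> j. if j = i then s else x $ j) t) has_real_derivative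
      - c\<^sup>2 * ((\<phi> x + t * \<psi> x) * pd_x i (pd_x i p) x t
                - p x t * (pdx i (pdx i \<phi>) x + t * pdx i (pdx i \<psi>) x))
      - \<beta> * ((\<phi> x + t * \<psi> x) * pd_x i (pd_x i (pd_t p)) x t
                - (pdx i (pdx i \<phi>) x + t * pdx i (pdx i \<psi>) x) * pd_t p x t)) (at (x $ i))"
    unfolding Tx_def
    by (rule derivative_eq_intros d\<phi> d\<phi>' d\<psi> d\<psi>' dp dp' dpt dpt' refl
        | simp add: coordinate_line_self algebra_simps)+
  then show ?thesis
    unfolding pd_x_def[of i "Tx \<beta> c \<phi> \<psi> p i"] by (rule DERIV_imp_deriv)
qed

lemma divergence_Tx:
  assumes "smooth \<phi>" and "smooth \<psi>" and "smooth_xt p"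
  shows "(\<Sum>i\<in>UNIV. pd_x i (Tx \<beta> c \<phi> \<psi> p i) x t)
    = - c\<^sup>2 * ((\<phi> x + t * \<psi> x) * laplacian_xt p x t
                - p x t * (laplacian \<phi> x + t * laplacian \<psi> x))
      - \<beta> * ((\<phi> x + t * \<psi> x) * laplacian_xt (pd_t p) x t
                - (laplacian \<phi> x + t * laplacian \<psi> x) * pd_t p x t)"
  unfolding pd_x_Tx[OF assms] laplacian_xt_def laplacian_def
  by (simp add: sum.distrib sum_subtractf sum_negf sum_distrib_left sum_distrib_right algebra_simps)

lemma divergence_T_eq_multiplier:
  assumes "smooth F" and "smooth \<phi>" and "smooth \<psi>" and "smooth_xt p"
  shows "pd_t (Tt F \<alpha> \<phi> \<psi> p) x t + (\<Sum>i\<in>UNIV. pd_x i (Tx \<beta> c \<phi> \<psi> p i) x t)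
    = (\<phi> x + t * \<psi> x) * (pd_t (pd_t (\<lambda>y s. F (p y s))) x t - \<alpha> * pd_t (pd_t (pd_t p)) x t
          - \<beta> * laplacian_xt (pd_t p) x t - c\<^sup>2 * laplacian_xt p x t)
      + (c\<^sup>2 * p x t + \<beta> * pd_t p x t) * (laplacian \<phi> x + t * laplacian \<psi> x)"
  unfolding pd_t_Tt[OF assms(1,4)] divergence_Tx[OF assms(2-4)] by (simp add: algebra_simps)

lemma conservation_law:
  assumes "smooth F" and "harmonic \<phi>" and "harmonic \<psi>"
    and "smooth_xt p" and "solves_eq F \<alpha> \<beta> c p"
  shows "pd_t (Tt F \<alpha> \<phi> \<psi> p) x t + (\<Sum>i\<in>UNIV. pd_x i (Tx \<beta> c \<phi> \<psi> p i) x t) = 0"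
  using assms divergence_T_eq_multiplier[of F \<phi> \<psi> p \<alpha> x t \<beta> c]
  by (simp add: harmonic_def solves_eq_def)

definition plane_coord :: "'n \<Rightarrow> 'n \<Rightarrow> real^'n \<Rightarrow> complex" where
  "plane_coord a b x = Complex (x $ a) (x $ b)"

definition re_monomial :: "'n \<Rightarrow> 'n \<Rightarrow> complex \<Rightarrow> nat \<Rightarrow> real^'n \<Rightarrow> real" where
  "re_monomial a b w m x = Re (w * plane_coord a b x ^ m)"

lemma bounded_linear_plane_coord: "bounded_linear (plane_coord a b)"
proof -
  have "linear (plane_coord a b)"
    by (rule linearI) (simp_all add: plane_coord_def complex_eq_iff)
  then show ?thesis
    by (simp add: linear_conv_bounded_linear)
qed

lemma has_derivative_re_monomial:
  "(re_monomial a b w m has_derivative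
      (\<lambda>v. Re (w * of_nat m * plane_coord a b x ^ (m - 1) * plane_coord a b v))) (at x)"
proof -
  have "((\<lambda>x. w * plane_coord a b x ^ m) has_derivative
      (\<lambda>v. w * of_nat m * plane_coord a b x ^ (m - 1) * plane_coord a b v)) (at x)"
    by (rule derivative_eq_intros bounded_linear_imp_has_derivative[OF bounded_linear_plane_coord]
        refl | simp add: algebra_simps)+
  then show ?thesis
    unfolding re_monomial_def by (rule bounded_linear.has_derivative[OF bounded_linear_Re])
qed

lemma frechet_derivative_re_monomial:
  "frechet_derivative (re_monomial a b w m) (at x) v
    = re_monomial a b (w * of_nat m * plane_coord a b v) (m - 1) x"
  unfolding frechet_derivative_at[OF has_derivative_re_monomial, symmetric]
  by (simp add: re_monomial_def ac_simps)

lemma smooth_re_monomial: "smooth (re_monomial a b w m)"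
proof -
  have "smooth f" if "\<exists>w m. f = re_monomial a b w m" for f
    using that
  proof (coinduction arbitrary: f rule: smooth.coinduct)
    case smooth
    then obtain w m where f: "f = re_monomial a b w m"
      by blast
    have "\<forall>x. f differentiable (at x)"
      unfolding f using has_derivative_re_monomial by (blast intro: differentiableI)
    moreover have "\<forall>v. \<exists>w' m'. (\<lambda>x. frechet_derivative f (at x) v) = re_monomial a b w' m'"
      unfolding f frechet_derivative_re_monomial by blast
    ultimately show ?case
      by blast
  qed
  then show ?thesis
    by blast
qed

lemma pdx_re_monomial:
  "pdx i (re_monomial a b w m) = re_monomial a b (w * of_nat m * plane_coord a b (axis i 1)) (m - 1)"
  by (simp add: fun_eq_iff pdx_eq_frechet_derivative smooth_imp_differentiable
      smooth_re_monomial frechet_derivative_re_monomial)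

lemma harmonic_re_monomial:
  assumes "a \<noteq> b"
  shows "harmonic (re_monomial a b w m)"
  unfolding harmonic_def
proof (intro conjI allI smooth_re_monomial)
  fix x
  have "(plane_coord a b (axis i 1))\<^sup>2 = of_bool (i = a) - of_bool (i = b)" for i
    using assms by (auto simp: plane_coord_def axis_def complex_eq_iff power2_eq_square)
  then have squares: "(\<Sum>i\<in>UNIV. (plane_coord a b (axis i 1))\<^sup>2) = 0"
    by (simp add: sum_subtractf)
  define K where "K = w * of_nat m * of_nat (m - 1) * plane_coord a b x ^ (m - 1 - 1)"
  have "laplacian (re_monomial a b w m) x = (\<Sum>i\<in>UNIV. Re (K * (plane_coord a b (axis i 1))\<^sup>2))"
    unfolding laplacian_def pdx_re_monomial K_def
    by (intro sum.cong refl) (simp add: re_monomial_def power2_eq_square ac_simps)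
  also have "\<dots> = Re (K * (\<Sum>i\<in>UNIV. (plane_coord a b (axis i 1))\<^sup>2))"
    by (simp only: Re_sum sum_distrib_left)
  finally show "laplacian (re_monomial a b w m) x = 0"
    using squares by simp
qed

lemma re_monomial_on_axis:
  assumes "a \<noteq> b"
  shows "re_monomial a b 1 m (\<chi> j. if j = a then s else 0) = s ^ m"
proof -
  have "plane_coord a b (\<chi> j. if j = a then s else 0) = of_real s"
    using assms by (simp add: plane_coord_def complex_eq_iff)
  then show ?thesis
    by (simp add: re_monomial_def flip: of_real_power)
qed

lemma re_monomials_linearly_independent:
  assumes "a \<noteq> b" and "\<forall>x. (\<Sum>k<N. c k * re_monomial a b 1 k x) = 0" and "k < N"
  shows "c k = 0"
proof -
  obtain M where N: "N = Suc M"
    using assms(3) not0_implies_Suc by fastforce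
  have "(\<Sum>m\<le>M. c m * s ^ m) = 0" for s
    using assms(2)[rule_format, of "\<chi> j. if j = a then s else 0"]
    by (simp add: re_monomial_on_axis[OF assms(1)] N lessThan_Suc_atMost)
  then show ?thesis
    using zero_polynom_imp_zero_coeffs assms(3) N by (metis less_Suc_eq_le)
qed

lemma infinitely_many_harmonic:
  assumes "CARD('n) \<ge> 2"
  shows "\<exists>h :: nat \<Rightarrow> real^'n \<Rightarrow> real. (\<forall>k<N. harmonic (h k)) \<and>
    (\<forall>c. (\<forall>x. (\<Sum>k<N. c k * h k x) = 0) \<longrightarrow> (\<forall>k<N. c k = 0))"
proof -
  obtain a b :: 'n where "a \<noteq> b"
    using assms by (meson card_2_iff' ex_card)
  then show ?thesis
    by (intro exI[of _ "re_monomial a b 1"] conjI allI impI harmonic_re_monomial)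
      (auto intro: re_monomials_linearly_independent)
qed

theorem mainTheorem6:
  fixes F :: "real \<Rightarrow> real" and \<alpha> \<beta> c :: real
    and \<phi> \<psi> :: "real^'n \<Rightarrow> real"
  assumes "smooth F" and "harmonic \<phi>" and "harmonic \<psi>"
  shows "(\<forall>p :: real^'n \<Rightarrow> real \<Rightarrow> real.
            smooth (\<lambda>z. p (fst z) (snd z)) \<and> solves_eq F \<alpha> \<beta> c p \<longrightarrow>
            (\<forall>x t. pd_t (Tt F \<alpha> \<phi> \<psi> p) x t + (\<Sum>i\<in>UNIV. pd_x i (Tx \<beta> c \<phi> \<psi> p i) x t) = 0))
     \<and> (CARD('n) \<ge> 2 \<longrightarrow>
          (\<forall>N::nat. \<exists>h :: nat \<Rightarrow> real^'n \<Rightarrow> real. (\<forall>k<N. harmonic (h k)) \<and>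
              (\<forall>a :: nat \<Rightarrow> real. (\<forall>x. (\<Sum>k<N. a k * h k x) = 0) \<longrightarrow> (\<forall>k<N. a k = 0))))"
proof (intro conjI allI impI)
  fix p :: "real^'n \<Rightarrow> real \<Rightarrow> real" and x t
  assume "smooth (\<lambda>z. p (fst z) (snd z)) \<and> solves_eq F \<alpha> \<beta> c p"
  then show "pd_t (Tt F \<alpha> \<phi> \<psi> p) x t + (\<Sum>i\<in>UNIV. pd_x i (Tx \<beta> c \<phi> \<psi> p i) x t) = 0"
    using conservation_law[OF assms] by (simp add: smooth_xt_def)
qed (rule infinitely_many_harmonic)

end
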